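(* Consider PATE-PSQ with SVT-based aggregation (context) run with $$T=\tilde{O}\Big(\Big(\frac{m^{2-\tau}d^{\tau}}{n^{\tau}\epsilon^{\tau}}\Big)^{\frac{2}{4-3\tau}}\Big),\qquad K=O\Big(\frac{\log(mT/\min(\delta,\beta))\sqrt{T\log(1/\delta)}}{\epsilon}\Big),$$ where $\tilde O$ hides polynomial factors of $\log(K/\gamma)$ and $\log(m/\beta)$. Assume $h^*\in\mathcal{H}$ is the Bayes optimal classifier and the Tsybakov noise condition with parameter $\tau$ holds, and condition on the events that (i) for all $k$, $\mathtt{Dis}(\hat h_k,h^* )\le C\big(\frac{dK\log(n/d)+\log(K/\gamma)}{n}\big)^{\tau/(2-\tau)}$, and (ii) for all $k$, $\sum_{j=1}^m\mathbbm{1}(\hat h_k(x_j)\ne h^*(x_j))\le O(\max\{m\,\mathtt{Dis}(\hat h_k,h^* ),\log(K/\gamma)\})$. Then with probability at least $1-\beta$ over the random coins of the algorithm alone, the algorithm finishes all $m$ queries without exhausting the cut-off budget and $$\sum_{j=1}^m\mathbbm{1}(\hat h^{\mathtt{priv}}_j\ne h^*(x_j))\le T.$$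
   Context: Feature space $\mathcal{X}$, labels $\{0,1\}$, distribution $\mathcal{D}$ with marginal $\mathcal{D}_\mathcal{X}$; $\mathcal{H}\subseteq\{0,1\}^\mathcal{X}$ of VC dimension $d$; $\mathtt{Err}$, $\mathtt{Dis}$ the population 0-1 error and disagreement. Bayes optimal $h^*(x)=\mathbbm{1}(\mathbb{E}[y|x]>1/2)$; Tsybakov noise condition: $\mathtt{Dis}(h,h^* )\le\eta(\mathtt{Err}(h)-\mathtt{Err}(h^* ))^\tau$ for all $h\in\mathcal{H}$, some $\eta\ge1$. $C$ is the constant from the teacher disagreement bound. Private data: $n$ i.i.d. samples; public $x_1,\dots,x_m$ i.i.d. from $\mathcal{D}_\mathcal{X}$. SVT-based aggregation (teachers $\hat h_1,\dots,\hat h_K$, queries $x_1,\dots,x_\ell$, cut-off $T$, $\epsilon,\delta$): $\lambda=(\sqrt{2T(\epsilon+\log(2/\delta))}+\sqrt{2T\log(2/\delta)})/\epsilon$, $w=3\lambda\log(2(\ell+T)/\delta)$, $\hat w=w+\mathtt{Lap}(\lambda)$, $c=0$; for each $j$: $\widehat\Delta(x_j)=|2\sum_k\hat h_k(x_j)-K|$, $\mathrm{dist}_j=\max\{0,\lceil\widehat\Delta(x_j)/2\rceil-1\}$, $\widehat{\mathrm{dist}}_j=\mathrm{dist}_j+\mathtt{Lap}(2\lambda)$; if $\widehat{\mathrm{dist}}_j>\hat w$ output $\mathbbm{1}(\sum_k\hat h_k(x_j)\ge K/2)$, else output $\perp$, $c\leftarrow c+1$, stop if $c\ge T$, resample $\hat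 w\leftarrow w+\mathtt{Lap}(\lambda)$. PATE-PSQ: randomly evenly split the private data into $K$ parts, train $\hat h_k\in\mathcal{H}$ by empirical risk minimization on part $k$, run the SVT-based aggregation with $\ell=m$ on $x_1,\dots,x_m$; $\hat h^{\mathtt{priv}}_j$ is the released pseudo-label of $x_j$ (with any $\perp$ replaced arbitrarily by a label in $\{0,1\}$). *)

theory Defs
  imports "HOL-Probability.Probability"
begin

text \<open>Labels \<open>{0,1}\<close> are rendered as bool (True = 1). The distribution D lives on
  X \<times> bool, where X carries the measurable space MX.\<close>

definition Err :: "('a \<times> bool) measure \<Rightarrow> ('a \<Rightarrow> bool) \<Rightarrow> real" where
  "Err D h = measure D {p \<in> space D. h (fst p) \<noteq> snd p}"

definition Dis :: "('a \<times> bool) measure \<Rightarrow> ('a \<Rightarrow> bool) \<Rightarrow> ('a \<Rightarrow> bool) \<Rightarrow> real" where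
  "Dis D h g = measure D {p \<in> space D. h (fst p) \<noteq> g (fst p)}"

text \<open>h is the Bayes optimal classifier 1(E[y|x] > 1/2): there is a version f of the
  regression function E[y|x] (a measurable [0,1]-valued function satisfying the defining
  property of conditional expectation w.r.t. the marginal D_X) with h x = (f x > 1/2).\<close>
definition bayes_optimal :: "'a measure \<Rightarrow> ('a \<times> bool) measure \<Rightarrow> ('a \<Rightarrow> bool) \<Rightarrow> bool" where
  "bayes_optimal MX D h \<longleftrightarrow>
     (\<exists>f. f \<in> borel_measurable MX \<and> (\<forall>x\<in>space MX. 0 \<le> f x \<and> f x \<le> 1) \<and>
          (\<forall>A\<in>sets MX. measure D {p \<in> space D. fst p \<in> A \<and> snd p}
                          = (\<integral>x\<in>A. f x \<partial>(distr D MX fst))) \<and>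
          (\<forall>x\<in>space MX. h x = (f x > 1/2)))"

definition tsybakov :: "('a \<times> bool) measure \<Rightarrow> ('a \<Rightarrow> bool) set \<Rightarrow> ('a \<Rightarrow> bool) \<Rightarrow> real \<Rightarrow> real \<Rightarrow> bool" where
  "tsybakov D H hs \<eta> \<tau> \<longleftrightarrow> (\<forall>h\<in>H. Dis D h hs \<le> \<eta> * (Err D h - Err D hs) powr \<tau>)"

definition shatters :: "('a \<Rightarrow> bool) set \<Rightarrow> 'a set \<Rightarrow> bool" where
  "shatters H A \<longleftrightarrow> (\<forall>B\<subseteq>A. \<exists>h\<in>H. \<forall>x\<in>A. h x = (x \<in> B))"

definition vc_dim :: "('a \<Rightarrow> bool) set \<Rightarrow> nat \<Rightarrow> bool" where
  "vc_dim H d \<longleftrightarrow> (\<exists>A. finite A \<and> card A = d \<and> shatters H A) \<and>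
                    (\<forall>A. finite A \<and> card A = Suc d \<longrightarrow> \<not> shatters H A)"

definition emp_err :: "(nat \<Rightarrow> 'a \<times> bool) \<Rightarrow> nat set \<Rightarrow> ('a \<Rightarrow> bool) \<Rightarrow> nat" where
  "emp_err S I h = card {i \<in> I. h (fst (S i)) \<noteq> snd (S i)}"

definition even_split :: "nat \<Rightarrow> nat \<Rightarrow> (nat \<Rightarrow> nat set) \<Rightarrow> bool" where
  "even_split n K P \<longleftrightarrow>
     (\<forall>k<K. P k \<subseteq> {..<n}) \<and> (\<forall>k<K. \<forall>k'<K. k \<noteq> k' \<longrightarrow> P k \<inter> P k' = {}) \<and>
     (\<Union>k<K. P k) = {..<n} \<and> (\<forall>k<K. n div K \<le> card (P k) \<and> card (P k) \<le> n div K + 1)"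

definition laplace :: "real \<Rightarrow> real measure" where
  "laplace b = density lborel (\<lambda>x. ennreal (exp (- \<bar>x\<bar> / b) / (2 * b)))"

definition svt_lambda :: "nat \<Rightarrow> real \<Rightarrow> real \<Rightarrow> real" where
  "svt_lambda T \<epsilon> \<delta> =
     (sqrt (2 * real T * (\<epsilon> + ln (2 / \<delta>))) + sqrt (2 * real T * ln (2 / \<delta>))) / \<epsilon>"

definition svt_w :: "nat \<Rightarrow> nat \<Rightarrow> real \<Rightarrow> real \<Rightarrow> real" where
  "svt_w l T \<epsilon> \<delta> = 3 * svt_lambda T \<epsilon> \<delta> * ln (2 * (real l + real T) / \<delta>)"

definition votes :: "(nat \<Rightarrow> 'a \<Rightarrow> bool) \<Rightarrow> nat \<Rightarrow> 'a \<Rightarrow> real" where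
  "votes hs K x = (\<Sum>k<K. of_bool (hs k x))"

definition svt_dist :: "(nat \<Rightarrow> 'a \<Rightarrow> bool) \<Rightarrow> nat \<Rightarrow> 'a \<Rightarrow> real" where
  "svt_dist hs K x = max 0 (real_of_int \<lceil>\<bar>2 * votes hs K x - real K\<bar> / 2\<rceil> - 1)"

definition majority :: "(nat \<Rightarrow> 'a \<Rightarrow> bool) \<Rightarrow> nat \<Rightarrow> 'a \<Rightarrow> bool" where
  "majority hs K x \<longleftrightarrow> votes hs K x \<ge> real K / 2"

text \<open>The noise is pre-sampled: \<nu> c is the threshold noise Lap(\<lambda>) used while the counter
  equals c (c < T), and \<xi> j is the query noise Lap(2\<lambda>) of query j (j < m).
  svt_cnt ... j is the value of the counter c before query j (queries indexed from 0).
  Query j is processed iff the counter is still below T (for T \<ge> 1 this matches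
  "stop if c \<ge> T").\<close>
primrec svt_cnt :: "(nat \<Rightarrow> 'a \<Rightarrow> bool) \<Rightarrow> nat \<Rightarrow> nat \<Rightarrow> real \<Rightarrow> (nat \<Rightarrow> real) \<Rightarrow> (nat \<Rightarrow> real)
                      \<Rightarrow> (nat \<Rightarrow> 'a) \<Rightarrow> nat \<Rightarrow> nat" where
  "svt_cnt hs K T w \<nu> \<xi> x 0 = 0"
| "svt_cnt hs K T w \<nu> \<xi> x (Suc j) =
     (let c = svt_cnt hs K T w \<nu> \<xi> x j in
      if c < T \<and> \<not> (svt_dist hs K (x j) + \<xi> j > w + \<nu> c) then c + 1 else c)"

text \<open>Released answer to query j: Some label, or None for \<bottom> / not processed.\<close>
definition svt_out :: "(nat \<Rightarrow> 'a \<Rightarrow> bool) \<Rightarrow> nat \<Rightarrow> nat \<Rightarrow> real \<Rightarrow> (nat \<Rightarrow> real) \<Rightarrow> (nat \<Rightarrow> real)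
                      \<Rightarrow> (nat \<Rightarrow> 'a) \<Rightarrow> nat \<Rightarrow> bool option" where
  "svt_out hs K T w \<nu> \<xi> x j =
     (let c = svt_cnt hs K T w \<nu> \<xi> x j in
      if c < T \<and> svt_dist hs K (x j) + \<xi> j > w + \<nu> c then Some (majority hs K (x j)) else None)"

definition svt_noise :: "nat \<Rightarrow> nat \<Rightarrow> real \<Rightarrow> ((nat \<Rightarrow> real) \<times> (nat \<Rightarrow> real)) measure" where
  "svt_noise T m lam = (PiM {..<T} (\<lambda>_. laplace lam)) \<Otimes>\<^sub>M (PiM {..<m} (\<lambda>_. laplace (2 * lam)))"

end

theory Submission
  imports Defs "HOL-Real_Asymp.Real_Asymp"
begin

(* Call a public point contested if at least a third of the K teachers disagree there with
   the Bayes classifier. Each teacher errs on at most E of the m points, so by double counting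
   at most 3E points are contested, and the choice of T makes 3E < T. At an uncontested point the
   vote margin exceeds K/6 - 1, and the choice of K makes this larger than the SVT threshold plus
   any Laplace noise within the tail bounds, which hold simultaneously with probability 1 - beta.
   On that event every uncontested point is answered, and answered with the Bayes label, so the
   budget is spent only on contested points: it is never exhausted, and the wrong or withheld
   answers number at most 3E < T. *)

section \<open>Laplace noise\<close>

lemma sets_laplace [measurable_cong]: "sets (laplace b) = sets borel"
  by (simp add: laplace_def)

lemma space_laplace: "space (laplace b) = UNIV"
  by (simp add: laplace_def)

lemma emeasure_laplace_atLeast:
  fixes a b :: real
  assumes b: "0 < b" and a: "0 \<le> a"
  shows "emeasure (laplace b) {a..} = ennreal (exp (- a / b) / 2)"
proof -
  have "emeasure (laplace b) {a..}
      = (\<integral>\<^sup>+x. ennreal (exp (- \<bar>x\<bar> / b) / (2 * b)) * indicator {a..} x \<partial>lborel)"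
    by (simp add: laplace_def emeasure_density)
  also have "\<dots> = ennreal (0 - (- exp (- a / b) / 2))"
  proof (rule nn_integral_FTC_atLeast)
    fix y assume "a \<le> y"
    then have "\<bar>y\<bar> = y" using a by simp
    then show "DERIV (\<lambda>y. - exp (- y / b) / 2) y :> exp (- \<bar>y\<bar> / b) / (2 * b)"
      using b by (auto intro!: derivative_eq_intros simp: field_simps)
  next
    show "((\<lambda>y. - exp (- y / b) / 2) \<longlongrightarrow> 0) at_top"
      using b by real_asymp
  qed (use b in simp_all)
  finally show ?thesis by simp
qed

lemma emeasure_laplace_atMost:
  fixes a b :: real
  assumes b: "0 < b" and a: "0 \<le> a"
  shows "emeasure (laplace b) {..-a} = ennreal (exp (- a / b) / 2)"
proof -
  let ?f = "\<lambda>x. ennreal (exp (- \<bar>x\<bar> / b) / (2 * b))"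
  have "emeasure (laplace b) {..-a} = (\<integral>\<^sup>+x. ?f x * indicator {..-a} x \<partial>lborel)"
    by (simp add: laplace_def emeasure_density)
  also have "\<dots> = (\<integral>\<^sup>+x. ?f (0 + (-1) * x) * indicator {..-a} (0 + (-1) * x) \<partial>lborel)"
    using nn_integral_real_affine[of "\<lambda>x. ?f x * indicator {..-a} x" "-1" 0] by simp
  also have "\<dots> = (\<integral>\<^sup>+x. ?f x * indicator {a..} x \<partial>lborel)"
    by (intro nn_integral_cong) (auto split: split_indicator)
  also have "\<dots> = emeasure (laplace b) {a..}"
    by (simp add: laplace_def emeasure_density)
  finally show ?thesis
    using emeasure_laplace_atLeast[OF b a] by simp
qed

lemma prob_space_laplace:
  fixes b :: real
  assumes b: "0 < b"
  shows "prob_space (laplace b)"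
proof
  let ?f = "\<lambda>x. ennreal (exp (- \<bar>x\<bar> / b) / (2 * b))"
  have "emeasure (laplace b) (space (laplace b))
      = (\<integral>\<^sup>+x. ?f x * indicator {..-0} x + ?f x * indicator {0..} x \<partial>lborel)"
    by (simp add: laplace_def emeasure_density nn_integral_cong_AE
        eventually_mono[OF AE_lborel_singleton[of 0]] split: split_indicator)
  also have "\<dots> = emeasure (laplace b) {..-0} + emeasure (laplace b) {0..}"
    by (simp add: nn_integral_add laplace_def emeasure_density)
  also have "\<dots> = ennreal (1/2) + ennreal (1/2)"
    using emeasure_laplace_atMost[OF b, of 0] emeasure_laplace_atLeast[OF b, of 0] by simp
  also have "\<dots> = 1"
    by (subst ennreal_plus[symmetric]) auto
  finally show "emeasure (laplace b) (space (laplace b)) = 1" .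
qed

lemma measure_laplace_atMost_ge:
  fixes b t :: real
  assumes b: "0 < b" and t: "0 \<le> t"
  shows "1 - exp (- t / b) / 2 \<le> measure (laplace b) {..t}"
proof -
  interpret prob_space "laplace b" by (rule prob_space_laplace[OF b])
  have "measure (laplace b) {t..} = exp (- t / b) / 2"
    using emeasure_laplace_atLeast[OF b t] by (simp add: measure_def)
  moreover have "measure (laplace b) {..t} = 1 - measure (laplace b) {t<..}"
    using prob_compl[of "{..t}"] by (simp add: space_laplace Compl_eq_Diff_UNIV[symmetric])
  moreover have "measure (laplace b) {t<..} \<le> measure (laplace b) {t..}"
    by (rule finite_measure_mono) auto
  ultimately show ?thesis by simp
qed

lemma measure_laplace_atLeast_ge:
  fixes b t :: real
  assumes b: "0 < b" and t: "0 \<le> t"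
  shows "1 - exp (- t / b) / 2 \<le> measure (laplace b) {-t..}"
proof -
  interpret prob_space "laplace b" by (rule prob_space_laplace[OF b])
  have "measure (laplace b) {..-t} = exp (- t / b) / 2"
    using emeasure_laplace_atMost[OF b t] by (simp add: measure_def)
  moreover have "measure (laplace b) {-t..} = 1 - measure (laplace b) {..<-t}"
    using prob_compl[of "{-t..}"] by (simp add: space_laplace Compl_eq_Diff_UNIV[symmetric])
  moreover have "measure (laplace b) {..<-t} \<le> measure (laplace b) {..-t}"
    by (rule finite_measure_mono) auto
  ultimately show ?thesis by simp
qed

lemma measure_PiM_PiE_iid_ge:
  assumes M: "prob_space M" and A: "A \<in> sets M"
    and p: "1 - p \<le> measure M A" "p \<le> 1"
  shows "1 - real n * p \<le> measure (PiM {..<n} (\<lambda>_. M)) (PiE {..<n} (\<lambda>_. A))"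
proof -
  interpret finite_product_prob_space "\<lambda>_. M" "{..<n}"
    by (auto simp: finite_product_prob_space_def finite_product_sigma_finite_def
        product_prob_space_def product_prob_space_axioms_def product_sigma_finite_def
        finite_product_sigma_finite_axioms_def M prob_space_imp_sigma_finite)
  have "1 - real n * p \<le> (1 - p) ^ n"
    using Bernoulli_inequality[of "- p" n] p by simp
  also have "\<dots> \<le> measure M A ^ n"
    using p by (intro power_mono) auto
  also have "\<dots> = measure (PiM {..<n} (\<lambda>_. M)) (PiE {..<n} (\<lambda>_. A))"
    using prob_times[of "\<lambda>_. A"] A by simp
  finally show ?thesis .
qed

lemma measure_pair_Times_ge:
  assumes "prob_space M1" "prob_space M2" and A: "A \<in> sets M1" and B: "B \<in> sets M2"
  shows "measure M1 A + measure M2 B - 1 \<le> measure (M1 \<Otimes>\<^sub>M M2) (A \<times> B)"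
proof -
  interpret pair_prob_space M1 M2
    using assms by (simp add: pair_prob_space_def pair_sigma_finite_def prob_space_imp_sigma_finite)
  have "measure (M1 \<Otimes>\<^sub>M M2) (A \<times> B) = measure M1 A * measure M2 B"
    using M2.emeasure_pair_measure_Times[OF A B] by (simp add: measure_def enn2real_mult)
  moreover have "0 \<le> (1 - measure M1 A) * (1 - measure M2 B)"
    by simp
  ultimately show ?thesis by (simp add: algebra_simps)
qed

lemma measure_svt_noise_bounded_ge:
  fixes lam t1 t2 :: real
  assumes lam: "0 < lam" and t1: "0 \<le> t1" and t2: "0 \<le> t2"
  shows "1 - real T * exp (- t1 / lam) / 2 - real m * exp (- t2 / (2 * lam)) / 2
     \<le> measure (svt_noise T m lam) (PiE {..<T} (\<lambda>_. {..t1}) \<times> PiE {..<m} (\<lambda>_. {-t2..}))"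
proof -
  have lam2: "0 < 2 * lam" using lam by simp
  have "exp (- t1 / lam) / 2 \<le> 1" "exp (- t2 / (2 * lam)) / 2 \<le> 1"
    using lam t1 t2 by (auto intro: order.trans[of _ 1] simp: divide_nonneg_pos)
  then have "1 - real T * (exp (- t1 / lam) / 2)
        \<le> measure (PiM {..<T} (\<lambda>_. laplace lam)) (PiE {..<T} (\<lambda>_. {..t1}))"
       and "1 - real m * (exp (- t2 / (2 * lam)) / 2)
        \<le> measure (PiM {..<m} (\<lambda>_. laplace (2 * lam))) (PiE {..<m} (\<lambda>_. {-t2..}))"
    by (intro measure_PiM_PiE_iid_ge prob_space_laplace lam lam2 measure_laplace_atMost_ge
        measure_laplace_atLeast_ge t1 t2; simp)+
  moreover have "measure (PiM {..<T} (\<lambda>_. laplace lam)) (PiE {..<T} (\<lambda>_. {..t1}))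
      + measure (PiM {..<m} (\<lambda>_. laplace (2 * lam))) (PiE {..<m} (\<lambda>_. {-t2..})) - 1
      \<le> measure (svt_noise T m lam) (PiE {..<T} (\<lambda>_. {..t1}) \<times> PiE {..<m} (\<lambda>_. {-t2..}))"
    unfolding svt_noise_def
    by (intro measure_pair_Times_ge prob_space_PiM prob_space_laplace lam lam2 sets_PiM_I_finite) auto
  ultimately show ?thesis by simp
qed

section \<open>Measurability of the sparse vector technique\<close>

context
  fixes T m :: nat and lam :: real
begin

lemma measurable_threshold_noise [measurable]:
  "c < T \<Longrightarrow> (\<lambda>\<omega>. fst \<omega> c) \<in> borel_measurable (svt_noise T m lam)"
  unfolding svt_noise_def by measurable

lemma measurable_query_noise [measurable]:
  "j < m \<Longrightarrow> (\<lambda>\<omega>. snd \<omega> j) \<in> borel_measurable (svt_noise T m lam)"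
  unfolding svt_noise_def by measurable

lemma sets_svt_passes:
  assumes "j < m"
  shows "{\<omega> \<in> space (svt_noise T m lam). c < T \<and> w + fst \<omega> c < a + snd \<omega> j} \<in> sets (svt_noise T m lam)"
proof (cases "c < T")
  case True
  then have "{\<omega> \<in> space (svt_noise T m lam). w + fst \<omega> c < a + snd \<omega> j} \<in> sets (svt_noise T m lam)"
    using assms by (intro borel_measurable_less borel_measurable_add borel_measurable_const
        measurable_threshold_noise measurable_query_noise)
  with True show ?thesis
    by simp
qed simp

lemma sets_svt_halts:
  assumes "j < m"
  shows "{\<omega> \<in> space (svt_noise T m lam). c < T \<and> \<not> w + fst \<omega> c < a + snd \<omega> j} \<in> sets (svt_noise T m lam)"
proof (cases "c < T")
  case True
  then have "{\<omega> \<in> space (svt_noise T m lam). a + snd \<omega> j \<le> w + fst \<omega> c} \<in> sets (svt_noise T m lam)"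
    using assms by (intro borel_measurable_le borel_measurable_add borel_measurable_const
        measurable_threshold_noise measurable_query_noise)
  with True show ?thesis
    by (simp add: not_less)
qed simp

lemma measurable_svt_cnt:
  "j \<le> m \<Longrightarrow> (\<lambda>\<omega>. svt_cnt hs K T w (fst \<omega>) (snd \<omega>) x j) \<in> measurable (svt_noise T m lam) (count_space UNIV)"
proof (induction j)
  case (Suc j)
  have step: "(\<lambda>\<omega>. if c < T \<and> \<not> w + fst \<omega> c < svt_dist hs K (x j) + snd \<omega> j then c + 1 else c)
      \<in> measurable (svt_noise T m lam) (count_space UNIV)" for c
    using Suc.prems by (intro measurable_If sets_svt_halts) simp_all
  show ?case
    unfolding svt_cnt.simps Let_def
    by (rule measurable_compose_countable[OF step Suc.IH]) (use Suc.prems in simp)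
qed simp

lemma measurable_svt_out:
  assumes j: "j < m"
  shows "(\<lambda>\<omega>. svt_out hs K T w (fst \<omega>) (snd \<omega>) x j) \<in> measurable (svt_noise T m lam) (count_space UNIV)"
proof -
  have step: "(\<lambda>\<omega>. if c < T \<and> w + fst \<omega> c < svt_dist hs K (x j) + snd \<omega> j
                      then Some (majority hs K (x j)) else None)
      \<in> measurable (svt_noise T m lam) (count_space UNIV)" for c
    using j by (intro measurable_If sets_svt_passes) simp_all
  show ?thesis
    unfolding svt_out_def Let_def
    by (rule measurable_compose_countable[OF step measurable_svt_cnt]) (use j in simp)
qed

lemma sets_svt_good_event:
  "{\<omega> \<in> space (svt_noise T m lam). svt_cnt hs K T w (fst \<omega>) (snd \<omega>) x m < T \<and>
      card {j. j < m \<and> svt_out hs K T w (fst \<omega>) (snd \<omega>) x j \<noteq> Some (h (x j))} \<le> T}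
   \<in> sets (svt_noise T m lam)"
proof -
  note [measurable] = measurable_svt_cnt[of m] measurable_svt_out
  have "Measurable.pred (svt_noise T m lam)
      (\<lambda>\<omega>. j < m \<and> svt_out hs K T w (fst \<omega>) (snd \<omega>) x j \<noteq> Some (h (x j)))" for j
    by (cases "j < m") simp_all
  then show ?thesis
    by measurable
qed

end

section \<open>Deterministic behaviour of the sparse vector technique\<close>

definition contested :: "(nat \<Rightarrow> 'a \<Rightarrow> bool) \<Rightarrow> nat \<Rightarrow> ('a \<Rightarrow> bool) \<Rightarrow> 'a \<Rightarrow> bool" where
  "contested hs K h y \<longleftrightarrow> real K \<le> 3 * real (card {k. k < K \<and> hs k y \<noteq> h y})"

lemma real_card_less_eq_sum_of_bool:
  "real (card {i. i < (n::nat) \<and> P i}) = (\<Sum>i<n. of_bool (P i))"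
proof -
  have "(\<Sum>i<n. of_bool (P i)) = real (card ({..<n} \<inter> Collect P))"
    by (rule sum_of_bool_eq) auto
  moreover have "{..<n} \<inter> Collect P = {i. i < n \<and> P i}"
    by auto
  ultimately show ?thesis
    by simp
qed

lemma votes_eq_card: "votes hs K y = real (card {k. k < K \<and> hs k y})"
  by (simp add: votes_def real_card_less_eq_sum_of_bool)

lemma uncontested_margin_and_majority:
  assumes "\<not> contested hs K h y"
  shows "real K / 6 - 1 < svt_dist hs K y" and "majority hs K y = h y"
proof -
  define W where "W = card {k. k < K \<and> hs k y \<noteq> h y}"
  have W: "3 * real W < real K"
    using assms by (simp add: contested_def W_def)
  have "card ({k. k < K \<and> hs k y} \<union> {k. k < K \<and> \<not> hs k y})
      = card {k. k < K \<and> hs k y} + card {k. k < K \<and> \<not> hs k y}"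
    by (rule card_Un_disjoint) auto
  moreover have "{k. k < K \<and> hs k y} \<union> {k. k < K \<and> \<not> hs k y} = {..<K}"
    by auto
  ultimately have "card {k. k < K \<and> hs k y} + card {k. k < K \<and> \<not> hs k y} = K"
    by simp
  then have votes: "votes hs K y = (if h y then real K - real W else real W)"
    by (cases "h y") (auto simp: votes_eq_card W_def algebra_simps simp flip: of_nat_add)
  then have "\<bar>2 * votes hs K y - real K\<bar> = real K - 2 * real W"
    using W by auto
  moreover have "real K / 6 < (real K - 2 * real W) / 2"
    using W by simp
  then have "real K / 6 < real_of_int \<lceil>(real K - 2 * real W) / 2\<rceil>"
    using le_of_int_ceiling less_le_trans by blast
  ultimately show "real K / 6 - 1 < svt_dist hs K y"
    unfolding svt_dist_def by simp
  show "majority hs K y = h y"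
    using votes W by (auto simp: majority_def)
qed

lemma card_contested_le:
  fixes x :: "nat \<Rightarrow> 'a"
  assumes K: "0 < K"
    and E: "\<And>k. k < K \<Longrightarrow> real (card {j. j < m \<and> hs k (x j) \<noteq> h (x j)}) \<le> E"
  shows "real (card {j. j < m \<and> contested hs K h (x j)}) \<le> 3 * E"
proof -
  let ?err = "\<lambda>k j. of_bool (hs k (x j) \<noteq> h (x j)) :: real"
  have "real K * real (card {j. j < m \<and> contested hs K h (x j)})
      = (\<Sum>j<m. real K * of_bool (contested hs K h (x j)))"
    by (simp only: real_card_less_eq_sum_of_bool sum_distrib_left)
  also have "\<dots> \<le> (\<Sum>j<m. 3 * (\<Sum>k<K. ?err k j))"
    by (intro sum_mono) (auto simp: contested_def real_card_less_eq_sum_of_bool)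
  also have "\<dots> = 3 * (\<Sum>k<K. \<Sum>j<m. ?err k j)"
    by (subst sum.swap) (simp only: sum_distrib_left)
  also have "\<dots> \<le> 3 * (\<Sum>k<K. E)"
    using E by (intro mult_left_mono sum_mono) (auto simp flip: real_card_less_eq_sum_of_bool)
  finally show ?thesis
    using K by simp
qed

context
  fixes hs :: "nat \<Rightarrow> 'a \<Rightarrow> bool" and K T m :: nat and h :: "'a \<Rightarrow> bool" and x :: "nat \<Rightarrow> 'a"
    and w t1 t2 :: real and \<nu> \<xi> :: "nat \<Rightarrow> real"
  assumes threshold_noise_le: "\<And>c. c < T \<Longrightarrow> \<nu> c \<le> t1"
    and query_noise_ge: "\<And>j. j < m \<Longrightarrow> - t2 \<le> \<xi> j"
    and margin: "w + t1 + t2 \<le> real K / 6 - 1"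
begin

lemma svt_passes_uncontested:
  assumes "j < m" and "c < T" and "\<not> contested hs K h (x j)"
  shows "w + \<nu> c < svt_dist hs K (x j) + \<xi> j"
  using uncontested_margin_and_majority(1)[OF assms(3)] threshold_noise_le[OF assms(2)]
    query_noise_ge[OF assms(1)] margin by linarith

lemma svt_cnt_le_card_contested:
  "j \<le> m \<Longrightarrow> svt_cnt hs K T w \<nu> \<xi> x j \<le> card {i. i < j \<and> contested hs K h (x i)}"
proof (induction j)
  case 0
  then show ?case by simp
next
  case (Suc j)
  let ?c = "svt_cnt hs K T w \<nu> \<xi> x j"
  have IH: "?c \<le> card {i. i < j \<and> contested hs K h (x i)}"
    using Suc by simp
  show ?case
  proof (cases "contested hs K h (x j)")
    case True
    then have "{i. i < Suc j \<and> contested hs K h (x i)} = insert j {i. i < j \<and> contested hs K h (x i)}"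
      by auto
    then show ?thesis
      using IH by (simp add: Let_def)
  next
    case False
    then have "{i. i < Suc j \<and> contested hs K h (x i)} = {i. i < j \<and> contested hs K h (x i)}"
      by (auto simp: less_Suc_eq)
    moreover have "svt_cnt hs K T w \<nu> \<xi> x (Suc j) = ?c"
      using svt_passes_uncontested[of j ?c] False Suc.prems by (auto simp: Let_def)
    ultimately show ?thesis
      using IH by simp
  qed
qed

lemma svt_within_budget:
  assumes few: "card {j. j < m \<and> contested hs K h (x j)} < T"
  shows "svt_cnt hs K T w \<nu> \<xi> x m < T"
    and "{j. j < m \<and> svt_out hs K T w \<nu> \<xi> x j \<noteq> Some (h (x j))} \<subseteq> {j. j < m \<and> contested hs K h (x j)}"
proof -
  have cnt_less: "svt_cnt hs K T w \<nu> \<xi> x j < T" if "j \<le> m" for j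
  proof -
    have "card {i. i < j \<and> contested hs K h (x i)} \<le> card {i. i < m \<and> contested hs K h (x i)}"
      using that by (intro card_mono) auto
    then show ?thesis
      using svt_cnt_le_card_contested[OF that] few by linarith
  qed
  then show "svt_cnt hs K T w \<nu> \<xi> x m < T"
    by simp
  show "{j. j < m \<and> svt_out hs K T w \<nu> \<xi> x j \<noteq> Some (h (x j))} \<subseteq> {j. j < m \<and> contested hs K h (x j)}"
  proof safe
    fix j assume j: "j < m" and wrong: "svt_out hs K T w \<nu> \<xi> x j \<noteq> Some (h (x j))"
    show "contested hs K h (x j)"
    proof (rule ccontr)
      assume uncontested: "\<not> contested hs K h (x j)"
      moreover have "svt_cnt hs K T w \<nu> \<xi> x j < T"
        using cnt_less j by simp
      ultimately have "svt_out hs K T w \<nu> \<xi> x j = Some (majority hs K (x j))"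
        using svt_passes_uncontested[OF j] by (simp add: svt_out_def Let_def)
      then show False
        using wrong uncontested_margin_and_majority(2)[OF uncontested] by simp
    qed
  qed
qed

end

lemma all_fillings_card_mismatch_le_iff:
  "(\<forall>r :: nat \<Rightarrow> bool. card {j. j < m \<and> (case out j of Some b \<Rightarrow> b | None \<Rightarrow> r j) \<noteq> h j} \<le> T)
   \<longleftrightarrow> card {j. j < m \<and> out j \<noteq> Some (h j)} \<le> T"
proof
  assume "\<forall>r. card {j. j < m \<and> (case out j of Some b \<Rightarrow> b | None \<Rightarrow> r j) \<noteq> h j} \<le> T"
  then have "card {j. j < m \<and> (case out j of Some b \<Rightarrow> b | None \<Rightarrow> \<not> h j) \<noteq> h j} \<le> T" ..
  moreover have "{j. j < m \<and> (case out j of Some b \<Rightarrow> b | None \<Rightarrow> \<not> h j) \<noteq> h j}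
      = {j. j < m \<and> out j \<noteq> Some (h j)}"
    by (auto split: option.splits)
  ultimately show "card {j. j < m \<and> out j \<noteq> Some (h j)} \<le> T"
    by simp
next
  assume le: "card {j. j < m \<and> out j \<noteq> Some (h j)} \<le> T"
  show "\<forall>r. card {j. j < m \<and> (case out j of Some b \<Rightarrow> b | None \<Rightarrow> r j) \<noteq> h j} \<le> T"
  proof
    fix r :: "nat \<Rightarrow> bool"
    have "card {j. j < m \<and> (case out j of Some b \<Rightarrow> b | None \<Rightarrow> r j) \<noteq> h j}
        \<le> card {j. j < m \<and> out j \<noteq> Some (h j)}"
      by (intro card_mono) (auto split: option.splits)
    then show "card {j. j < m \<and> (case out j of Some b \<Rightarrow> b | None \<Rightarrow> r j) \<noteq> h j} \<le> T"
      using le by linarith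
  qed
qed

section \<open>Parameter arithmetic\<close>

lemma ln_inverse_ge_two_thirds:
  fixes \<delta> :: real
  assumes "0 < \<delta>" "\<delta> \<le> 1/2"
  shows "2/3 \<le> ln (1 / \<delta>)"
proof -
  have "ln 2 \<le> ln (1 / \<delta>)"
    using assms by (subst ln_le_cancel_iff) (auto simp: field_simps)
  then show ?thesis
    using ln2_ge_two_thirds by linarith
qed

lemma svt_lambda_bounds:
  fixes \<epsilon> \<delta> :: real
  assumes T: "1 \<le> T" and \<epsilon>: "0 < \<epsilon>" "\<epsilon> \<le> 1" and \<delta>: "0 < \<delta>" "\<delta> \<le> 1/2"
  shows "0 < svt_lambda T \<epsilon> \<delta>" and "svt_lambda T \<epsilon> \<delta> \<le> 6 * (sqrt (real T * ln (1 / \<delta>)) / \<epsilon>)"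
proof -
  define l where "l = ln (1 / \<delta>)"
  have l: "2/3 \<le> l" "ln 2 \<le> l"
    using ln_inverse_ge_two_thirds[OF \<delta>] \<delta> unfolding l_def
    by (auto simp: field_simps)
  have ln_2_div: "ln (2 / \<delta>) = ln 2 + l"
    using \<delta> by (simp add: l_def ln_div)
  have "2 * real T * (\<epsilon> + ln (2 / \<delta>)) \<le> 9 * (real T * l)"
       "2 * real T * ln (2 / \<delta>) \<le> 9 * (real T * l)"
    using T \<epsilon> l ln_2_div by (simp_all add: mult_left_mono)
  then have "sqrt (2 * real T * (\<epsilon> + ln (2 / \<delta>))) \<le> 3 * sqrt (real T * l)"
            "sqrt (2 * real T * ln (2 / \<delta>)) \<le> 3 * sqrt (real T * l)"
    by (simp_all add: real_sqrt_mult flip: real_sqrt_le_iff[of _ "9 * _"])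
  then show "svt_lambda T \<epsilon> \<delta> \<le> 6 * (sqrt (real T * ln (1 / \<delta>)) / \<epsilon>)"
    using \<epsilon> unfolding svt_lambda_def l_def by (simp add: divide_right_mono)
  have "0 < ln (2 / \<delta>)"
    using ln_2_div l ln2_ge_two_thirds by linarith
  then show "0 < svt_lambda T \<epsilon> \<delta>"
    using T \<epsilon> \<delta> unfolding svt_lambda_def
    by (intro divide_pos_pos add_nonneg_pos) (simp_all add: add_nonneg_pos)
qed

lemma ln_le_ln_frac:
  fixes a b P p :: real
  assumes "0 < a" "a \<le> P" "0 < p" "p \<le> b"
  shows "ln (a / b) \<le> ln (P / p)"
  using assms by (subst ln_le_cancel_iff) (auto intro: frac_le)

lemma svt_scale_ge:
  fixes \<epsilon> \<delta> \<beta> :: real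
  assumes m: "1 \<le> m" and T: "1 \<le> T" and \<epsilon>: "0 < \<epsilon>" "\<epsilon> \<le> 1"
    and \<delta>: "0 < \<delta>" "\<delta> \<le> 1/2" and \<beta>: "0 < \<beta>"
  shows "ln 2 \<le> ln (real m * real T / min \<delta> \<beta>)" and "1/2 \<le> sqrt (real T * ln (1 / \<delta>)) / \<epsilon>"
proof -
  have "ln (1 / (1/2)) \<le> ln (real m * real T / min \<delta> \<beta>)"
    using m T \<delta> \<beta> mult_mono[of 1 "real m" 1 "real T"] by (intro ln_le_ln_frac) simp_all
  then show "ln 2 \<le> ln (real m * real T / min \<delta> \<beta>)"
    by simp
  have "sqrt (1/4) \<le> sqrt (real T * ln (1 / \<delta>))"
    using T ln_inverse_ge_two_thirds[OF \<delta>] mult_mono[of 1 "real T" "2/3" "ln (1 / \<delta>)"]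
    by (intro real_sqrt_le_mono) simp
  also have "\<dots> \<le> sqrt (real T * ln (1 / \<delta>)) / \<epsilon>"
    using \<epsilon> ln_inverse_ge_two_thirds[OF \<delta>] by (simp add: le_divide_eq mult_left_le)
  finally show "1/2 \<le> sqrt (real T * ln (1 / \<delta>)) / \<epsilon>"
    by (simp add: real_sqrt_divide)
qed

lemma svt_threshold_margin:
  fixes \<epsilon> \<delta> \<beta> :: real
  assumes m: "1 \<le> m" and T: "1 \<le> T" and \<epsilon>: "0 < \<epsilon>" "\<epsilon> \<le> 1"
    and \<delta>: "0 < \<delta>" "\<delta> \<le> 1/2" and \<beta>: "0 < \<beta>" "\<beta> < 1"
    and K: "500 * (ln (real m * real T / min \<delta> \<beta>) * (sqrt (real T * ln (1 / \<delta>)) / \<epsilon>)) \<le> real K"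
  shows "svt_w m T \<epsilon> \<delta> + svt_lambda T \<epsilon> \<delta> * ln (real T / \<beta>) + 2 * svt_lambda T \<epsilon> \<delta> * ln (real m / \<beta>)
           \<le> real K / 6 - 1"
proof -
  define \<Lambda> where "\<Lambda> = ln (real m * real T / min \<delta> \<beta>)"
  define S where "S = sqrt (real T * ln (1 / \<delta>)) / \<epsilon>"
  define lam where "lam = svt_lambda T \<epsilon> \<delta>"
  have \<Lambda>: "ln 2 \<le> \<Lambda>" and S: "1/2 \<le> S"
    using svt_scale_ge[OF m T \<epsilon> \<delta>] \<beta> by (simp_all add: \<Lambda>_def S_def)
  have lam: "0 < lam" "lam \<le> 6 * S"
    using svt_lambda_bounds[OF T \<epsilon> \<delta>] by (simp_all add: lam_def S_def)
  have mT: "real m \<le> real m * real T" "real T \<le> real m * real T"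
    using m T by (simp_all add: Suc_le_eq)
  then have "2 * (real m + real T) \<le> 4 * (real m * real T)"
    by (simp add: algebra_simps)
  then have "ln (2 * (real m + real T) / \<delta>) \<le> ln (4 * (real m * real T) / min \<delta> \<beta>)"
    using m T \<delta> \<beta> by (intro ln_le_ln_frac) auto
  also have "\<dots> = 2 * ln 2 + \<Lambda>"
    using m T \<delta> \<beta> ln_realpow[of 2 2] by (simp add: \<Lambda>_def ln_div ln_mult)
  finally have ln_w: "ln (2 * (real m + real T) / \<delta>) \<le> 3 * \<Lambda>"
    using \<Lambda> by linarith
  have ln_T: "0 \<le> ln (real T / \<beta>)" "ln (real T / \<beta>) \<le> \<Lambda>"
    using T \<beta> unfolding \<Lambda>_def by (simp, intro ln_le_ln_frac) (use mT \<delta> in auto)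
  have ln_m: "0 \<le> ln (real m / \<beta>)" "ln (real m / \<beta>) \<le> \<Lambda>"
    using m \<beta> unfolding \<Lambda>_def by (simp, intro ln_le_ln_frac) (use mT \<delta> in auto)
  have "svt_w m T \<epsilon> \<delta> + lam * ln (real T / \<beta>) + 2 * lam * ln (real m / \<beta>)
      \<le> 3 * lam * (3 * \<Lambda>) + lam * \<Lambda> + 2 * lam * \<Lambda>"
    unfolding svt_w_def lam_def[symmetric] using lam ln_w ln_T ln_m
    by (intro add_mono mult_left_mono) auto
  also have "\<dots> \<le> 72 * (S * \<Lambda>)"
    using lam \<Lambda> ln2_ge_two_thirds by (simp add: algebra_simps mult_right_mono)
  also have "\<dots> \<le> real K / 6 - 1"
  proof -
    have "1/2 * ln 2 \<le> S * \<Lambda>"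
      using mult_mono[OF S \<Lambda>] S by simp
    moreover have "500 * (S * \<Lambda>) \<le> real K"
      using K by (simp add: \<Lambda>_def S_def mult.commute)
    ultimately show ?thesis
      using ln2_ge_two_thirds by linarith
  qed
  finally show ?thesis
    by (simp add: lam_def)
qed

lemma ln_parameters_le:
  fixes \<delta> \<beta> \<gamma> :: real and K m n d T :: nat
  assumes K: "1 \<le> K" and m: "1 \<le> m" and d: "1 \<le> d" "d \<le> n" and T: "1 \<le> T"
    and \<delta>: "0 < \<delta>" "\<delta> \<le> 1/2" and \<beta>: "0 < \<beta>" "\<beta> < 1" and \<gamma>: "0 < \<gamma>" "\<gamma> < 1"
  defines "L \<equiv> ln (real K * real m * real n * real T / (\<gamma> * \<beta> * \<delta>))"
  shows "ln 2 \<le> L" and "ln (real K / \<gamma>) \<le> L" and "ln (real n / real d) \<le> L"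
    and "ln (real m * real T / min \<delta> \<beta>) \<le> L" and "ln (1 / \<delta>) \<le> L"
proof -
  define P where "P = real K * real m * real n * real T"
  have "K \<le> K * m * n * T" "n \<le> K * m * n * T" "m * T \<le> K * m * n * T" "1 \<le> K * m * n * T"
    using K m d T by (simp_all add: Suc_le_eq)
  then have P: "real K \<le> P" "real n \<le> P" "real m * real T \<le> P" "1 \<le> P"
    unfolding P_def by (simp_all flip: of_nat_mult)
  have "\<gamma> * \<beta> \<le> \<gamma>" "\<gamma> * \<beta> \<le> \<beta>"
    using \<beta> \<gamma> by (simp_all add: mult_right_le_one_le mult_left_le_one_le)
  moreover have "\<gamma> * \<beta> * \<delta> \<le> \<gamma> * \<beta>" "\<gamma> * \<beta> * \<delta> \<le> \<delta>"
    using \<beta> \<gamma> \<delta> by (simp_all add: mult_right_le_one_le mult_left_le_one_le mult_le_one)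
  moreover have "0 < \<gamma> * \<beta> * \<delta>" "1 \<le> real d"
    using \<beta> \<gamma> \<delta> d by simp_all
  ultimately have p: "0 < \<gamma> * \<beta> * \<delta>" "\<gamma> * \<beta> * \<delta> \<le> \<gamma>" "\<gamma> * \<beta> * \<delta> \<le> min \<delta> \<beta>"
      "\<gamma> * \<beta> * \<delta> \<le> 1/2" "\<gamma> * \<beta> * \<delta> \<le> real d" "\<gamma> * \<beta> * \<delta> \<le> \<delta>"
    using \<delta> unfolding min.bounded_iff by linarith+
  have L: "L = ln (P / (\<gamma> * \<beta> * \<delta>))"
    by (simp add: L_def P_def)
  show "ln 2 \<le> L"
    using ln_le_ln_frac[of 1 P "\<gamma> * \<beta> * \<delta>" "1/2"] P p by (simp add: L)
  show "ln (real K / \<gamma>) \<le> L" "ln (real n / real d) \<le> L"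
      "ln (real m * real T / min \<delta> \<beta>) \<le> L" "ln (1 / \<delta>) \<le> L"
    unfolding L using P p K m T d by (intro ln_le_ln_frac; simp)+
qed

lemma disagreement_rate_le:
  fixes \<epsilon> \<delta> \<beta> \<gamma> :: real and K m n d T :: nat
  assumes K: "1 \<le> K" and m: "1 \<le> m" and d: "1 \<le> d" "d \<le> n" and T: "1 \<le> T"
    and \<epsilon>: "0 < \<epsilon>" "\<epsilon> \<le> 1" and \<delta>: "0 < \<delta>" "\<delta> \<le> 1/2"
    and \<beta>: "0 < \<beta>" "\<beta> < 1" and \<gamma>: "0 < \<gamma>" "\<gamma> < 1"
    and K_le: "real K \<le> 504 * (ln (real m * real T / min \<delta> \<beta>) * (sqrt (real T * ln (1 / \<delta>)) / \<epsilon>))"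
  defines "L \<equiv> ln (real K * real m * real n * real T / (\<gamma> * \<beta> * \<delta>))"
  shows "(real d * real K * ln (real n / real d) + ln (real K / \<gamma>)) / real n
           \<le> 1008 * (real d / (real n * \<epsilon>)) * L powr (5/2) * real T powr (1/2)"
proof -
  note L = ln_parameters_le[OF K m d T \<delta> \<beta> \<gamma>, folded L_def]
  have L_pos: "0 < L"
    using L(1) ln2_ge_two_thirds by linarith
  have dK: "1 \<le> real d * real K"
    using K d mult_mono[of 1 "real d" 1 "real K"] by simp
  have "sqrt (real T * ln (1 / \<delta>)) / \<epsilon> \<le> sqrt (real T * L) / \<epsilon>"
    using L(5) \<epsilon> by (simp add: divide_right_mono mult_left_mono)
  then have "ln (real m * real T / min \<delta> \<beta>) * (sqrt (real T * ln (1 / \<delta>)) / \<epsilon>)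
      \<le> L * (sqrt (real T * L) / \<epsilon>)"
    using L(4) L_pos ln_inverse_ge_two_thirds[OF \<delta>] \<epsilon> by (intro mult_mono) simp_all
  then have "real K \<le> 504 * (L * (sqrt (real T * L) / \<epsilon>))"
    using K_le by linarith
  also have "\<dots> = 504 * L powr (3/2) * real T powr (1/2) / \<epsilon>"
  proof -
    have "L powr (3/2) = L powr 1 * L powr (1/2)"
      using powr_add[of L 1 "1/2"] L_pos by simp
    then show ?thesis
      using L_pos by (simp add: powr_half_sqrt real_sqrt_mult)
  qed
  finally have K_le_L: "real K \<le> 504 * L powr (3/2) * real T powr (1/2) / \<epsilon>" .
  have "real d * real K * ln (real n / real d) \<le> real d * real K * L"
    using L(3) dK by (intro mult_left_mono) simp_all
  moreover have "ln (real K / \<gamma>) \<le> real d * real K * L"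
    using L(2) mult_right_mono[OF dK, of L] L_pos by linarith
  ultimately have "real d * real K * ln (real n / real d) + ln (real K / \<gamma>) \<le> 2 * real d * L * real K"
    by (simp add: algebra_simps)
  also have "\<dots> \<le> 2 * real d * L * (504 * L powr (3/2) * real T powr (1/2) / \<epsilon>)"
    using K_le_L L_pos by (intro mult_left_mono) simp_all
  also have "\<dots> = 1008 * real d * (L * L powr (3/2)) * real T powr (1/2) / \<epsilon>"
    by (simp add: algebra_simps)
  also have "L * L powr (3/2) = L powr (5/2)"
    using powr_add[of L 1 "3/2"] L_pos by simp
  finally have "(real d * real K * ln (real n / real d) + ln (real K / \<gamma>)) / real n
      \<le> (1008 * real d * L powr (5/2) * real T powr (1/2) / \<epsilon>) / real n"
    by (rule divide_right_mono) simp
  then show ?thesis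
    by (simp add: mult.commute)
qed

lemma tsybakov_exponent_identity:
  fixes \<tau> m u :: real
  assumes \<tau>: "0 \<le> \<tau>" "\<tau> \<le> 1" and m: "0 < m" and u: "0 < u"
  shows "((m powr (2 - \<tau>) * u powr \<tau>) powr (2 / (4 - 3 * \<tau>))) powr (1 - \<tau> / (2 - \<tau>) / 2)
           = m * u powr (\<tau> / (2 - \<tau>))"
proof -
  have nonzero: "4 - 3 * \<tau> \<noteq> 0" "2 - \<tau> \<noteq> 0"
    using \<tau> by auto
  have "1 - \<tau> / (2 - \<tau>) / 2 = (4 - 3 * \<tau>) / (2 * (2 - \<tau>))"
    using nonzero by (simp add: field_simps)
  then have exponent: "2 / (4 - 3 * \<tau>) * (1 - \<tau> / (2 - \<tau>) / 2) = 1 / (2 - \<tau>)"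
    using nonzero by (simp add: divide_simps) (simp add: algebra_simps)
  have "((m powr (2 - \<tau>) * u powr \<tau>) powr (2 / (4 - 3 * \<tau>))) powr (1 - \<tau> / (2 - \<tau>) / 2)
      = (m powr (2 - \<tau>) * u powr \<tau>) powr (1 / (2 - \<tau>))"
    by (simp only: powr_powr exponent)
  also have "\<dots> = m powr ((2 - \<tau>) * (1 / (2 - \<tau>))) * u powr (\<tau> * (1 / (2 - \<tau>)))"
    using m u by (simp only: powr_mult powr_ge_zero powr_powr)
  also have "\<dots> = m * u powr (\<tau> / (2 - \<tau>))"
    using nonzero m by simp
  finally show ?thesis .
qed

lemma powr_le_64_of_ge_half:
  fixes L e :: real
  assumes L: "1/2 \<le> L" and e: "- 6 \<le> e" "e \<le> 0"
  shows "L powr e \<le> 64"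
proof -
  have "L powr e \<le> (1/2) powr e"
    using L e by (intro powr_mono2') simp_all
  also have "\<dots> = 2 powr (- e)"
    by (simp add: powr_divide powr_minus_divide)
  also have "\<dots> \<le> 2 powr 6"
    using e by (intro powr_mono) simp_all
  finally show ?thesis
    by simp
qed

lemma disagreement_powr_le:
  fixes X c u L T q :: real
  assumes X: "0 \<le> X" "X \<le> c * u * L powr (5/2) * T powr (1/2)"
    and c: "1 \<le> c" and pos: "0 < u" "0 < L" "0 < T" and q: "0 \<le> q" "q \<le> 1"
  shows "X powr q \<le> c * u powr q * L powr (5/2 * q) * T powr (q/2)"
proof -
  have "X powr q \<le> (c * u * L powr (5/2) * T powr (1/2)) powr q"
    using X q by (intro powr_mono2) simp_all
  also have "\<dots> = c powr q * u powr q * L powr (5/2 * q) * T powr (q/2)"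
    using c pos by (simp add: powr_mult powr_powr)
  also have "\<dots> \<le> c * u powr q * L powr (5/2 * q) * T powr (q/2)"
    using powr_mono[OF q(2) c] c by (intro mult_right_mono) simp_all
  finally show ?thesis .
qed

lemma budget_powr_le:
  fixes A cT L T r :: real
  assumes pos: "0 < A" "0 < cT" "0 < L" and r: "0 \<le> r" and T: "cT * A * L ^ 6 \<le> T"
  shows "A powr r \<le> T powr r / (cT powr r * L powr (6 * r))"
proof -
  have L6: "L ^ 6 = L powr 6"
    using pos by (simp add: powr_realpow)
  then have L6_powr: "(L ^ 6) powr r = L powr (6 * r)"
    by (simp only: powr_powr)
  have AT: "A * (cT * L ^ 6) \<le> T"
    using T by (simp only: mult_ac)
  moreover have "0 < A * (cT * L ^ 6)"
    using pos by simp
  ultimately have T_pos: "0 < T"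
    by linarith
  from AT have "A \<le> T / (cT * L powr 6)"
    using pos by (simp add: pos_le_divide_eq flip: L6)
  then have "A powr r \<le> (T / (cT * L powr 6)) powr r"
    using pos r by (intro powr_mono2) simp_all
  also have "\<dots> = T powr r / (cT powr r * L powr (6 * r))"
    using pos T_pos by (simp add: powr_divide powr_mult L6_powr)
  finally show ?thesis .
qed

lemma mistakes_balanced_by_budget:
  fixes \<tau> u X L c cT m T :: real
  assumes \<tau>: "0 \<le> \<tau>" "\<tau> \<le> 1" and m: "0 < m" and u: "0 < u"
    and X: "0 \<le> X" "X \<le> c * u * L powr (5/2) * T powr (1/2)"
    and c: "1 \<le> c" and L: "1/2 \<le> L" and cT: "1 \<le> cT"
    and T: "cT * (m powr (2 - \<tau>) * u powr \<tau>) powr (2 / (4 - 3 * \<tau>)) * L ^ 6 \<le> T"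
  shows "m * X powr (\<tau> / (2 - \<tau>)) \<le> 64 * c * T / sqrt cT"
proof -
  define q where "q = \<tau> / (2 - \<tau>)"
  define r where "r = 1 - q / 2"
  define A where "A = (m powr (2 - \<tau>) * u powr \<tau>) powr (2 / (4 - 3 * \<tau>))"
  have q: "0 \<le> q" "q \<le> 1" and r: "1/2 \<le> r" "r \<le> 1"
    using \<tau> by (auto simp: q_def r_def field_simps)
  have A: "0 < A"
    using m u by (simp add: A_def)
  have "0 < cT * A * L ^ 6"
    using A cT L by simp
  then have T_pos: "0 < T"
    using T by (simp add: A_def)
  \<comment> \<open>r is chosen so that A powr r = m * u powr q and r + q / 2 = 1: the two powers of T
     recombine to T, and only a bounded power of L remains\<close>
  have "m * u powr q = A powr r"
    using tsybakov_exponent_identity[OF \<tau> m u] by (simp add: A_def q_def r_def)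
  also have "\<dots> \<le> T powr r / (cT powr r * L powr (6 * r))"
    using A cT L r T by (intro budget_powr_le) (simp_all add: A_def)
  finally have uq: "m * u powr q \<le> T powr r / (cT powr r * L powr (6 * r))" .
  have "m * X powr q \<le> m * (c * u powr q * L powr (5/2 * q) * T powr (q/2))"
    using disagreement_powr_le[OF X c u _ T_pos q] m L by (intro mult_left_mono) simp_all
  also have "\<dots> = c * (m * u powr q) * L powr (5/2 * q) * T powr (q/2)"
    by (simp only: ac_simps)
  also have "\<dots> \<le> c * (T powr r / (cT powr r * L powr (6 * r))) * L powr (5/2 * q) * T powr (q/2)"
    using uq c by (intro mult_right_mono mult_left_mono) simp_all
  also have "\<dots> = c * (T powr r * T powr (q/2)) * (L powr (5/2 * q) / L powr (6 * r)) / cT powr r"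
    by (simp add: field_simps)
  also have "T powr r * T powr (q/2) = T"
    using T_pos by (simp add: r_def flip: powr_add)
  also have "L powr (5/2 * q) / L powr (6 * r) = L powr (5/2 * q - 6 * r)"
    by (simp add: powr_diff)
  also have "c * T * L powr (5/2 * q - 6 * r) / cT powr r \<le> c * T * 64 / cT powr r"
    using L q r c T_pos cT
    by (intro divide_right_mono mult_left_mono powr_le_64_of_ge_half) (simp_all add: r_def)
  also have "\<dots> \<le> c * T * 64 / sqrt cT"
    using cT r c T_pos powr_mono[of "1/2" r cT]
    by (intro divide_left_mono) (simp_all add: powr_half_sqrt)
  finally show ?thesis
    by (simp add: q_def mult.commute)
qed

lemma log_term_lt_power_six:
  fixes c s L :: real
  assumes c: "0 < c" and s: "96 * c + 1 \<le> s" and L: "1/2 \<le> L"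
  shows "3 * (c * L) < s\<^sup>2 * L ^ 6"
proof -
  have "(1/2) ^ 5 \<le> L ^ 5"
    using L by (intro power_mono) simp_all
  then have "L * (1/32) \<le> L * L ^ 5"
    using L by (intro mult_left_mono) (simp_all add: power_divide)
  then have L6: "L / 32 \<le> L ^ 6"
    using power_add[of L 1 5] by simp
  have "3 * (c * L) < (96 * c + 1) * (L / 32)"
    using L by (simp add: field_simps)
  also have "\<dots> \<le> s * L ^ 6"
    using s L6 L c by (intro mult_mono) simp_all
  also have "\<dots> \<le> s\<^sup>2 * L ^ 6"
    using s c by (intro mult_right_mono) (simp_all add: power2_eq_square)
  finally show ?thesis .
qed

(* 193536 = 3 * 64 * 1008 absorbs the constants of disagreement_rate_le and
   mistakes_balanced_by_budget; 96 = 3 * 32 pays for the ln (K / gamma) term. *)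
lemma mistake_bound_lt_budget:
  fixes \<tau> C c2 \<epsilon> \<delta> \<beta> \<gamma> :: real and K m n d T :: nat
  assumes \<tau>: "0 \<le> \<tau>" "\<tau> \<le> 1" and C: "0 < C" and c2: "0 < c2"
    and K: "1 \<le> K" and m: "1 \<le> m" and d: "1 \<le> d" "d \<le> n" and T: "1 \<le> T"
    and \<epsilon>: "0 < \<epsilon>" "\<epsilon> \<le> 1" and \<delta>: "0 < \<delta>" "\<delta> \<le> 1/2"
    and \<beta>: "0 < \<beta>" "\<beta> < 1" and \<gamma>: "0 < \<gamma>" "\<gamma> < 1"
    and K_le: "real K \<le> 504 * (ln (real m * real T / min \<delta> \<beta>) * (sqrt (real T * ln (1 / \<delta>)) / \<epsilon>))"
    and T_ge: "(193536 * c2 * C + 96 * c2 + 1)\<^sup>2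
                 * max 1 ((real m powr (2 - \<tau>) * real d powr \<tau> / (real n * \<epsilon>) powr \<tau>) powr (2 / (4 - 3 * \<tau>)))
                 * (ln (real K * real m * real n * real T / (\<gamma> * \<beta> * \<delta>))) ^ 6 \<le> real T"
  shows "3 * (c2 * max (real m * (C * ((real d * real K * ln (real n / real d) + ln (real K / \<gamma>)) / real n)
                                         powr (\<tau> / (2 - \<tau>))))
                       (ln (real K / \<gamma>))) < real T"
proof -
  define s where "s = 193536 * c2 * C + 96 * c2 + 1"
  define L where "L = ln (real K * real m * real n * real T / (\<gamma> * \<beta> * \<delta>))"
  define u where "u = real d / (real n * \<epsilon>)"
  define A where "A = (real m powr (2 - \<tau>) * u powr \<tau>) powr (2 / (4 - 3 * \<tau>))"
  define X where "X = (real d * real K * ln (real n / real d) + ln (real K / \<gamma>)) / real n"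
  note ln_le = ln_parameters_le[OF K m d T \<delta> \<beta> \<gamma>, folded L_def]
  have L: "1/2 \<le> L"
    using ln_le(1) ln2_ge_two_thirds by linarith
  have s: "1 \<le> s" "193536 * c2 * C < s" "96 * c2 + 1 \<le> s"
    using C c2 by (simp_all add: s_def)
  then have s2: "s \<le> s\<^sup>2" "sqrt (s\<^sup>2) = s"
    by (simp_all add: power2_eq_square)
  have u: "0 < u"
    using d \<epsilon> by (simp add: u_def)
  have "real m powr (2 - \<tau>) * real d powr \<tau> / (real n * \<epsilon>) powr \<tau> = real m powr (2 - \<tau>) * u powr \<tau>"
    by (simp add: u_def powr_divide)
  then have T_ge_A: "s\<^sup>2 * max 1 A * L ^ 6 \<le> real T"
    using T_ge by (simp only: s_def L_def A_def)
  have "s\<^sup>2 * A * L ^ 6 \<le> s\<^sup>2 * max 1 A * L ^ 6" "s\<^sup>2 * 1 * L ^ 6 \<le> s\<^sup>2 * max 1 A * L ^ 6"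
    using L by (intro mult_right_mono mult_left_mono; simp)+
  then have T_ge_split: "s\<^sup>2 * A * L ^ 6 \<le> real T" "s\<^sup>2 * L ^ 6 \<le> real T"
    using T_ge_A by simp_all
  have X: "0 \<le> X" "X \<le> 1008 * u * L powr (5/2) * real T powr (1/2)"
    using K d \<gamma> disagreement_rate_le[OF K m d T \<epsilon> \<delta> \<beta> \<gamma> K_le]
    by (simp_all add: X_def u_def L_def)
  have "real m * X powr (\<tau> / (2 - \<tau>)) \<le> 64 * 1008 * real T / sqrt (s\<^sup>2)"
    using m s s2
    by (intro mistakes_balanced_by_budget[OF \<tau> _ u X _ L _ T_ge_split(1)[unfolded A_def]]) simp_all
  then have "(3 * c2 * C) * (real m * X powr (\<tau> / (2 - \<tau>))) \<le> (3 * c2 * C) * (64 * 1008 * real T / s)"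
    using s2 c2 C by (intro mult_left_mono) simp_all
  then have "3 * (c2 * (real m * (C * X powr (\<tau> / (2 - \<tau>))))) \<le> 193536 * c2 * C * real T / s"
    by (simp add: mult_ac)
  also have "\<dots> < real T"
    using s T by (simp add: divide_less_eq)
  finally have mistakes_lt: "3 * (c2 * (real m * (C * X powr (\<tau> / (2 - \<tau>))))) < real T" .
  have "3 * (c2 * L) < s\<^sup>2 * L ^ 6"
    using c2 s(3) L by (rule log_term_lt_power_six)
  moreover have "3 * (c2 * ln (real K / \<gamma>)) \<le> 3 * (c2 * L)"
    using ln_le(2) c2 by simp
  ultimately have "3 * (c2 * ln (real K / \<gamma>)) < real T"
    using T_ge_split(2) by linarith
  with mistakes_lt show ?thesis
    by (simp add: X_def)
qed

section \<open>The privately released labels\<close>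

lemma teacher_count_bounds:
  fixes \<epsilon> \<delta> \<beta> :: real
  assumes m: "1 \<le> m" and T: "1 \<le> T" and \<epsilon>: "0 < \<epsilon>" "\<epsilon> \<le> 1"
    and \<delta>: "0 < \<delta>" "\<delta> \<le> 1/2" and \<beta>: "0 < \<beta>"
    and K_def: "K = nat \<lceil>500 * ln (real m * real T / min \<delta> \<beta>) * sqrt (real T * ln (1 / \<delta>)) / \<epsilon>\<rceil>"
  shows "500 * (ln (real m * real T / min \<delta> \<beta>) * (sqrt (real T * ln (1 / \<delta>)) / \<epsilon>)) \<le> real K"
    and "real K \<le> 504 * (ln (real m * real T / min \<delta> \<beta>) * (sqrt (real T * ln (1 / \<delta>)) / \<epsilon>))"
    and "1 \<le> K"
proof -
  define z where "z = ln (real m * real T / min \<delta> \<beta>) * (sqrt (real T * ln (1 / \<delta>)) / \<epsilon>)"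
  have "ln 2 * (1/2) \<le> z"
    unfolding z_def using svt_scale_ge[OF m T \<epsilon> \<delta> \<beta>] ln2_ge_two_thirds
    by (intro mult_mono) linarith+
  then have z: "1/3 \<le> z"
    using ln2_ge_two_thirds by linarith
  have K: "K = nat \<lceil>500 * z\<rceil>"
    unfolding K_def z_def by (simp add: mult.assoc)
  have "500 * z \<le> real K" "real K \<le> 504 * z" "1 \<le> K"
    using z unfolding K by linarith+
  then show "500 * (ln (real m * real T / min \<delta> \<beta>) * (sqrt (real T * ln (1 / \<delta>)) / \<epsilon>)) \<le> real K"
    and "real K \<le> 504 * (ln (real m * real T / min \<delta> \<beta>) * (sqrt (real T * ln (1 / \<delta>)) / \<epsilon>))"
    and "1 \<le> K"
    by (simp_all only: z_def)
qed

lemma svt_noise_box_subset_good_event: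
  fixes x :: "nat \<Rightarrow> 'a" and t1 t2 w lam :: real
  assumes margin: "w + t1 + t2 \<le> real K / 6 - 1"
    and few_contested: "card {j. j < m \<and> contested hs K h (x j)} < T"
  shows "PiE {..<T} (\<lambda>_. {..t1}) \<times> PiE {..<m} (\<lambda>_. {-t2..})
    \<subseteq> {\<omega> \<in> space (svt_noise T m lam). svt_cnt hs K T w (fst \<omega>) (snd \<omega>) x m < T \<and>
         card {j. j < m \<and> svt_out hs K T w (fst \<omega>) (snd \<omega>) x j \<noteq> Some (h (x j))} \<le> T}"
proof
  fix \<omega> assume "\<omega> \<in> PiE {..<T} (\<lambda>_. {..t1}) \<times> PiE {..<m} (\<lambda>_. {-t2..})"
  then obtain \<nu> \<xi> where \<omega>: "\<omega> = (\<nu>, \<xi>)"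
    and \<nu>: "\<nu> \<in> PiE {..<T} (\<lambda>_. {..t1})" and \<xi>: "\<xi> \<in> PiE {..<m} (\<lambda>_. {-t2..})"
    by blast
  from \<nu> \<xi> have "\<And>c. c < T \<Longrightarrow> \<nu> c \<le> t1" "\<And>j. j < m \<Longrightarrow> - t2 \<le> \<xi> j"
    by auto
  note within = svt_within_budget[OF this margin few_contested]
  have "card {j. j < m \<and> svt_out hs K T w \<nu> \<xi> x j \<noteq> Some (h (x j))}
      \<le> card {j. j < m \<and> contested hs K h (x j)}"
    using within(2) by (intro card_mono) auto
  moreover have "(\<nu>, \<xi>) \<in> space (svt_noise T m lam)"
    using \<nu> \<xi> by (auto simp: svt_noise_def space_pair_measure space_PiM space_laplace)
  ultimately show "\<omega> \<in> {\<omega> \<in> space (svt_noise T m lam). svt_cnt hs K T w (fst \<omega>) (snd \<omega>) x m < T \<and>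
      card {j. j < m \<and> svt_out hs K T w (fst \<omega>) (snd \<omega>) x j \<noteq> Some (h (x j))} \<le> T}"
    using within(1) few_contested \<omega> by simp
qed

lemma svt_good_event_prob_ge:
  fixes \<epsilon> \<delta> \<beta> :: real and x :: "nat \<Rightarrow> 'a"
  assumes m: "1 \<le> m" and T: "1 \<le> T" and \<epsilon>: "0 < \<epsilon>" "\<epsilon> \<le> 1"
    and \<delta>: "0 < \<delta>" "\<delta> \<le> 1/2" and \<beta>: "0 < \<beta>" "\<beta> < 1"
    and K: "500 * (ln (real m * real T / min \<delta> \<beta>) * (sqrt (real T * ln (1 / \<delta>)) / \<epsilon>)) \<le> real K"
    and few_contested: "card {j. j < m \<and> contested hs K h (x j)} < T"
  defines "w \<equiv> svt_w m T \<epsilon> \<delta>" and "N \<equiv> svt_noise T m (svt_lambda T \<epsilon> \<delta>)"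
  shows "1 - \<beta> \<le> measure N {\<omega> \<in> space N. svt_cnt hs K T w (fst \<omega>) (snd \<omega>) x m < T \<and>
           card {j. j < m \<and> svt_out hs K T w (fst \<omega>) (snd \<omega>) x j \<noteq> Some (h (x j))} \<le> T}"
    (is "_ \<le> measure N ?good")
proof -
  define lam where "lam = svt_lambda T \<epsilon> \<delta>"
  \<comment> \<open>tail levels at which each union bound over the Laplace noises costs beta / 2\<close>
  define t1 where "t1 = lam * ln (real T / \<beta>)"
  define t2 where "t2 = 2 * lam * ln (real m / \<beta>)"
  have lam: "0 < lam"
    using svt_lambda_bounds[OF T \<epsilon> \<delta>] by (simp add: lam_def)
  have t: "0 \<le> t1" "0 \<le> t2"
    using lam T m \<beta> by (simp_all add: t1_def t2_def)
  have "real T * exp (- t1 / lam) = \<beta>" "real m * exp (- t2 / (2 * lam)) = \<beta>"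
    using lam T m \<beta> by (simp_all add: t1_def t2_def exp_minus)
  then have "1 - \<beta> \<le> measure N (PiE {..<T} (\<lambda>_. {..t1}) \<times> PiE {..<m} (\<lambda>_. {-t2..}))"
    using measure_svt_noise_bounded_ge[OF lam t, of T m] by (simp add: N_def lam_def)
  also have "\<dots> \<le> measure N ?good"
  proof -
    interpret N: prob_space N
      unfolding N_def svt_noise_def lam_def[symmetric] using lam
      by (intro prob_space_pair prob_space_PiM prob_space_laplace) simp_all
    have "w + t1 + t2 \<le> real K / 6 - 1"
      using svt_threshold_margin[OF m T \<epsilon> \<delta> \<beta> K] by (simp add: w_def t1_def t2_def lam_def)
    then have "PiE {..<T} (\<lambda>_. {..t1}) \<times> PiE {..<m} (\<lambda>_. {-t2..}) \<subseteq> ?good"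
      unfolding N_def by (rule svt_noise_box_subset_good_event[OF _ few_contested])
    moreover have "?good \<in> sets N"
      unfolding N_def by (rule sets_svt_good_event)
    ultimately show ?thesis
      by (rule N.finite_measure_mono)
  qed
  finally show ?thesis .
qed

lemma even_split_parts_pos:
  assumes "even_split n K P" and "0 < n"
  shows "0 < K"
proof (rule ccontr)
  assume "\<not> 0 < K"
  then have "{..<n} = {}"
    using assms(1) by (simp add: even_split_def)
  then show False
    using assms(2) by (simp add: lessThan_empty_iff)
qed

lemma svt_pseudo_labels_within_budget:
  fixes \<tau> C c2 \<epsilon> \<delta> \<beta> \<gamma> :: real and K m n d T :: nat and x :: "nat \<Rightarrow> 'a"
    and dis :: "nat \<Rightarrow> real"
  assumes \<tau>: "0 \<le> \<tau>" "\<tau> \<le> 1" and C: "0 < C" and c2: "0 < c2"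
    and d: "1 \<le> d" "d \<le> n" and \<epsilon>: "0 < \<epsilon>" "\<epsilon> \<le> 1" and \<delta>: "0 < \<delta>" "\<delta> \<le> 1/2"
    and \<beta>: "0 < \<beta>" "\<beta> < 1" and \<gamma>: "0 < \<gamma>" "\<gamma> < 1" and m: "1 \<le> m"
    and K_def: "K = nat \<lceil>500 * ln (real m * real T / min \<delta> \<beta>) * sqrt (real T * ln (1 / \<delta>)) / \<epsilon>\<rceil>"
    and T_ge: "(193536 * c2 * C + 96 * c2 + 1)\<^sup>2
                 * max 1 ((real m powr (2 - \<tau>) * real d powr \<tau> / (real n * \<epsilon>) powr \<tau>) powr (2 / (4 - 3 * \<tau>)))
                 * (ln (real K * real m * real n * real T / (\<gamma> * \<beta> * \<delta>))) ^ 6 \<le> real T"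
    and split: "even_split n K P"
    and dis_le: "\<And>k. k < K \<Longrightarrow> dis k
                   \<le> C * ((real d * real K * ln (real n / real d) + ln (real K / \<gamma>)) / real n) powr (\<tau> / (2 - \<tau>))"
    and mistakes: "\<And>k. k < K \<Longrightarrow> real (card {j. j < m \<and> hs k (x j) \<noteq> h (x j)})
                     \<le> c2 * max (real m * dis k) (ln (real K / \<gamma>))"
  shows "let w = svt_w m T \<epsilon> \<delta>; N = svt_noise T m (svt_lambda T \<epsilon> \<delta>) in
       measure N {\<omega> \<in> space N.
          svt_cnt hs K T w (fst \<omega>) (snd \<omega>) x m < T \<and>
          (\<forall>r :: nat \<Rightarrow> bool.
             card {j. j < m \<and> (case svt_out hs K T w (fst \<omega>) (snd \<omega>) x j of Some b \<Rightarrow> b | None \<Rightarrow> r j)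
                              \<noteq> h (x j)} \<le> T)} \<ge> 1 - \<beta>"
proof -
  have T: "1 \<le> T"
  proof (rule ccontr)
    assume "\<not> 1 \<le> T"
    \<comment> \<open>since ln 0 = 0, the formula for K then gives K = 0, which no split of a nonempty
       sample allows; this is the only use of the split\<close>
    then have "K = 0"
      by (simp add: K_def le_simps(3))
    then show False
      using even_split_parts_pos[OF split] d by simp
  qed
  note K = teacher_count_bounds[OF m T \<epsilon> \<delta> \<beta>(1) K_def]
  define B where "B = C * ((real d * real K * ln (real n / real d) + ln (real K / \<gamma>)) / real n)
                          powr (\<tau> / (2 - \<tau>))"
  define E where "E = c2 * max (real m * B) (ln (real K / \<gamma>))"
  have budget: "3 * E < real T"
    unfolding E_def B_def by (rule mistake_bound_lt_budget[OF \<tau> C c2 K(3) m d T \<epsilon> \<delta> \<beta> \<gamma> K(2) T_ge])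
  have teacher_mistakes: "real (card {j. j < m \<and> hs k (x j) \<noteq> h (x j)}) \<le> E" if "k < K" for k
  proof -
    have "max (real m * dis k) (ln (real K / \<gamma>)) \<le> max (real m * B) (ln (real K / \<gamma>))"
      using dis_le[OF that] by (intro max.mono mult_left_mono) (simp_all add: B_def)
    then have "c2 * max (real m * dis k) (ln (real K / \<gamma>)) \<le> E"
      unfolding E_def using c2 by (intro mult_left_mono) simp_all
    with mistakes[OF that] show ?thesis
      by linarith
  qed
  have "real (card {j. j < m \<and> contested hs K h (x j)}) \<le> 3 * E"
    using K(3) teacher_mistakes by (intro card_contested_le) simp_all
  with budget have "card {j. j < m \<and> contested hs K h (x j)} < T"
    by linarith
  from svt_good_event_prob_ge[OF m T \<epsilon> \<delta> \<beta> K(1) this] show ?thesis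
    unfolding Let_def all_fillings_card_mismatch_le_iff .
qed

theorem lemma15:
  fixes \<tau> \<eta> C c2 :: real
  assumes "0 \<le> \<tau>" and "\<tau> \<le> 1" and "\<eta> \<ge> 1" and "C > 0" and "c2 > 0"
  shows "\<exists>cT cK :: real. \<exists>p :: nat. cT > 0 \<and> cK > 0 \<and>
    (\<forall>(MX :: 'a measure) (D :: ('a \<times> bool) measure) (H :: ('a \<Rightarrow> bool) set) (hstar :: 'a \<Rightarrow> bool)
       (d :: nat) (n :: nat) (S :: nat \<Rightarrow> 'a \<times> bool) (P :: nat \<Rightarrow> nat set) (K :: nat)
       (hs :: nat \<Rightarrow> 'a \<Rightarrow> bool) (m :: nat) (x :: nat \<Rightarrow> 'a) (\<epsilon> :: real) (\<delta> :: real)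
       (\<beta> :: real) (\<gamma> :: real) (T :: nat).
      prob_space D \<and> sets D = sets (MX \<Otimes>\<^sub>M count_space UNIV) \<and>
      vc_dim H d \<and> 1 \<le> d \<and> d \<le> n \<and>
      hstar \<in> H \<and> bayes_optimal MX D hstar \<and> tsybakov D H hstar \<eta> \<tau> \<and>
      0 < \<epsilon> \<and> \<epsilon> \<le> 1 \<and> 0 < \<delta> \<and> \<delta> \<le> 1/2 \<and> 0 < \<beta> \<and> \<beta> < 1 \<and> 0 < \<gamma> \<and> \<gamma> < 1 \<and> 1 \<le> m \<and>
      K = nat \<lceil>cK * ln (real m * real T / min \<delta> \<beta>) * sqrt (real T * ln (1 / \<delta>)) / \<epsilon>\<rceil> \<and>
      real T \<ge> cT * max 1 ((real m powr (2 - \<tau>) * real d powr \<tau> / (real n * \<epsilon>) powr \<tau>)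
                              powr (2 / (4 - 3 * \<tau>)))
              * (ln (real K * real m * real n * real T / (\<gamma> * \<beta> * \<delta>))) ^ p \<and>
      even_split n K P \<and>
      (\<forall>k<K. hs k \<in> H \<and> (\<forall>g\<in>H. emp_err S (P k) (hs k) \<le> emp_err S (P k) g)) \<and>
      (\<forall>k<K. Dis D (hs k) hstar
               \<le> C * ((real d * real K * ln (real n / real d) + ln (real K / \<gamma>)) / real n)
                      powr (\<tau> / (2 - \<tau>))) \<and>
      (\<forall>k<K. real (card {j. j < m \<and> hs k (x j) \<noteq> hstar (x j)})
               \<le> c2 * max (real m * Dis D (hs k) hstar) (ln (real K / \<gamma>)))
      \<longrightarrow>
      (let w = svt_w m T \<epsilon> \<delta>; N = svt_noise T m (svt_lambda T \<epsilon> \<delta>) in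
       measure N {\<omega> \<in> space N.
          svt_cnt hs K T w (fst \<omega>) (snd \<omega>) x m < T \<and>
          (\<forall>r :: nat \<Rightarrow> bool.
             card {j. j < m \<and> (case svt_out hs K T w (fst \<omega>) (snd \<omega>) x j of Some b \<Rightarrow> b | None \<Rightarrow> r j)
                              \<noteq> hstar (x j)} \<le> T)} \<ge> 1 - \<beta>))"
proof -
  have "0 \<le> 193536 * c2 * C"
    using assms by simp
  then have cT: "0 < (193536 * c2 * C + 96 * c2 + 1)\<^sup>2"
    using assms by (intro zero_less_power) linarith
  show ?thesis
  proof (rule exI[of _ "(193536 * c2 * C + 96 * c2 + 1)\<^sup>2"], rule exI[of _ "500 :: real"],
      rule exI[of _ "6 :: nat"], intro conjI allI impI)
    show "0 < (193536 * c2 * C + 96 * c2 + 1)\<^sup>2"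
      by (rule cT)
    show "(0 :: real) < 500"
      by simp
  qed (elim conjE, rule svt_pseudo_labels_within_budget[OF assms(1,2,4,5)]; (assumption | blast))
qed

end
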